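(* Let $\mathcal{S}=(\mathbb{Z}_n,\mathcal{S}_1,\dots,\mathcal{S}_4)$ be a cyclic triomino set with $\gcd(n,6)=1$, and let $m$, the filler $F$ and the brick $B$ be as defined below. Suppose $W\subset\{((3m+2)x,5y,6z): x,y,z\in\mathbb{Z}\}$ satisfies $W+(0,0,6n)=W$, $W\oplus B$ is non-overlapping, and $F$ tiles $\mathbb{Z}^3\setminus(W\oplus B)$. Then the $\mathcal{S}$-cyclic triomino problem is solvable.
   Context: Cyclic triomino set: $\mathcal{S}_i\subset\mathbb{Z}_n^3$ invariant under $(a,b,c)\mapsto(a+k,b+k,c+k)$ for all $k$; with $u_1=(1,0),u_2=(0,1),u_3=(-1,0),u_4=(0,-1)$ (indices mod 4), the $\mathcal{S}$-cyclic triomino problem is solvable if some $\mathcal{T}:\mathbb{Z}^2\to\mathbb{Z}_n$ has $(\mathcal{T}(s),\mathcal{T}(s+u_i),\mathcal{T}(s+u_{i+1}))\in\mathcal{S}_i$ for all $s$, $1\le i\le4$. $A\oplus B=\{a+b\}$, non-overlapping if each sum has a unique representation; $P$ tiles $E$ if $W'\oplus P=E$ non-overlapping for some $W'$; $cA=\{ca\}$; $I_{a,b}=\{x\in\mathbb{Z}: a\le x\le b\}$. Blockers (subsets of $\mathbb{Z}$): $\alpha_0=\emptyset,\alpha_1=\{0,5\}$, $\beta_0=\{1,4\},\beta_1=\emptyset$, $\gamma_0=\emptyset,\gamma_1=\{2,3\}$. With $\delta(0)=1$, $\delta(i)=0$ for $i\ne0$: $\alpha_T=\bigcup_{i=0}^{n-1}(n\alpha_{\delta(i)}+6i)$,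 and $\beta_T,\gamma_T$ likewise. $O=\{-1,0,1\}^2\setminus\{(0,0)\}$; filler $F=O\times\{0,n\}$. For each $i$ let $\overline{K_i}\subset\mathbb{Z}_n^3$ be a set of representatives with $\overline{K_i}\oplus\{(k,k,k):k\in\mathbb{Z}_n\}$ non-overlapping and equal to $\mathbb{Z}_n^3\setminus\mathcal{S}_i$; entries of $\mathbb{Z}_n$ are identified with integers in $\{0,\dots,n-1\}$. Let $m=\sum_{i=1}^4|\overline{K_i}|$ and list the elements of $\overline{K_1},\overline{K_2},\overline{K_3},\overline{K_4}$ in order as $(a_1,b_1,c_1),\dots,(a_m,b_m,c_m)$, with $(a_i,b_i,c_i)\in\overline{K_{g(i)}}$. Empty brick $B_0=I_{0,3m+1}\times I_{0,4}\times I_{0,6n-1}\setminus\bigcup_{i=0}^{m-1}(O\times I_{0,6n-1}+(3i+2,2,0))$. Define $T_{0,i,j}=O\times\alpha_T+(3i-1,2,-6j)$; $T_{1,i,j}=T_{5,i,j}=O\times\beta_T+(3i-3m-3,2,-6j)$; $T_{2,i,j}=O\times\gamma_T+(3i-1,-3,-6j)$; $T_{3,i,j}=O\times\beta_T+(3i+3m+1,2,-6j)$; $T_{4,i,j}=O\times\gamma_T+(3i-1,7,-6j)$. The brick is $B=B_0\cup\bigcup_{i=1}^m\big(T_{0,i,a_i}\cup T_{g(i),i,b_i}\cup T_{g(i)+1,i,c_i}\big)$. *)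

theory Defs
  imports Main
begin

type_synonym pt3 = "int \<times> int \<times> int"

definition padd :: "pt3 \<Rightarrow> pt3 \<Rightarrow> pt3" where
  "padd p q = (case p of (a,b,c) \<Rightarrow> (case q of (x,y,z) \<Rightarrow> (a+x, b+y, c+z)))"

definition p2add :: "int \<times> int \<Rightarrow> int \<times> int \<Rightarrow> int \<times> int" where
  "p2add p q = (fst p + fst q, snd p + snd q)"

definition msum :: "pt3 set \<Rightarrow> pt3 set \<Rightarrow> pt3 set" where
  "msum A B = {padd a b | a b. a \<in> A \<and> b \<in> B}"

definition non_overlapping :: "pt3 set \<Rightarrow> pt3 set \<Rightarrow> bool" where
  "non_overlapping A B \<longleftrightarrow>
     (\<forall>a1\<in>A. \<forall>b1\<in>B. \<forall>a2\<in>A. \<forall>b2\<in>B. padd a1 b1 = padd a2 b2 \<longrightarrow> a1 = a2 \<and> b1 = b2)"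

definition tiles :: "pt3 set \<Rightarrow> pt3 set \<Rightarrow> bool" where
  "tiles P E \<longleftrightarrow> (\<exists>W'. non_overlapping W' P \<and> msum W' P = E)"

definition Zn3 :: "nat \<Rightarrow> pt3 set" where
  "Zn3 n = {(a,b,c). 0 \<le> a \<and> a < int n \<and> 0 \<le> b \<and> b < int n \<and> 0 \<le> c \<and> c < int n}"

definition shiftd :: "nat \<Rightarrow> pt3 \<Rightarrow> int \<Rightarrow> pt3" where
  "shiftd n p k = (case p of (a,b,c) \<Rightarrow> ((a+k) mod int n, (b+k) mod int n, (c+k) mod int n))"

definition cyclic_triomino_set :: "nat \<Rightarrow> (nat \<Rightarrow> pt3 set) \<Rightarrow> bool" where
  "cyclic_triomino_set n S \<longleftrightarrow>
     (\<forall>i\<in>{1..4}. S i \<subseteq> Zn3 n \<and> (\<forall>p k. p \<in> S i \<longrightarrow> shiftd n p k \<in> S i))"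

definition uvec :: "nat \<Rightarrow> int \<times> int" where
  "uvec i = (if i mod 4 = 1 then (1,0) else if i mod 4 = 2 then (0,1)
             else if i mod 4 = 3 then (-1,0) else (0,-1))"

definition triomino_solvable :: "nat \<Rightarrow> (nat \<Rightarrow> pt3 set) \<Rightarrow> bool" where
  "triomino_solvable n S \<longleftrightarrow>
     (\<exists>T :: int \<times> int \<Rightarrow> int. (\<forall>s. 0 \<le> T s \<and> T s < int n) \<and>
        (\<forall>s. \<forall>i\<in>{1..4}. (T s, T (p2add s (uvec i)), T (p2add s (uvec (Suc i)))) \<in> S i))"

text \<open>Kbar j (j in {1..4}) lists the elements of a set of representatives of
  (Z_n^3 - S_j) modulo the diagonal, without repetition.\<close>
definition representatives :: "nat \<Rightarrow> (nat \<Rightarrow> pt3 set) \<Rightarrow> (nat \<Rightarrow> pt3 list) \<Rightarrow> bool" where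
  "representatives n S Kbar \<longleftrightarrow>
     (\<forall>j\<in>{1..4}. distinct (Kbar j) \<and> set (Kbar j) \<subseteq> Zn3 n \<and>
        (\<forall>r1\<in>set (Kbar j). \<forall>r2\<in>set (Kbar j). \<forall>k1\<in>{0..<int n}. \<forall>k2\<in>{0..<int n}.
            shiftd n r1 k1 = shiftd n r2 k2 \<longrightarrow> r1 = r2 \<and> k1 = k2) \<and>
        {shiftd n r k | r k. r \<in> set (Kbar j) \<and> k \<in> {0..<int n}} = Zn3 n - S j)"

text \<open>The list (g(i),(a_i,b_i,c_i)), i = 1..m (stored at list position i-1).\<close>
definition enum_reps :: "(nat \<Rightarrow> pt3 list) \<Rightarrow> (nat \<times> pt3) list" where
  "enum_reps Kbar = concat (map (\<lambda>j. map (\<lambda>t. (j, t)) (Kbar j)) [1,2,3,4])"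

definition alpha :: "nat \<Rightarrow> int set" where "alpha i = (if i = 0 then {} else {0,5})"
definition beta :: "nat \<Rightarrow> int set" where "beta i = (if i = 0 then {1,4} else {})"
definition gamma :: "nat \<Rightarrow> int set" where "gamma i = (if i = 0 then {} else {2,3})"
definition delta :: "nat \<Rightarrow> nat" where "delta i = (if i = 0 then 1 else 0)"

definition blockT :: "(nat \<Rightarrow> int set) \<Rightarrow> nat \<Rightarrow> int set" where
  "blockT X n = (\<Union>i\<in>{0..<n}. (\<lambda>x. int n * x + 6 * int i) ` X (delta i))"

definition Osq :: "(int \<times> int) set" where
  "Osq = ({-1,0,1} \<times> {-1,0,1}) - {(0,0)}"

definition prism :: "int set \<Rightarrow> pt3 \<Rightarrow> pt3 set" where
  "prism A v = {padd (p, q, r) v | p q r. (p,q) \<in> Osq \<and> r \<in> A}"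

definition filler :: "nat \<Rightarrow> pt3 set" where
  "filler n = prism {0, int n} (0,0,0)"

definition empty_brick :: "nat \<Rightarrow> nat \<Rightarrow> pt3 set" where
  "empty_brick n m =
     ({0..3 * int m + 1} \<times> {0..4} \<times> {0..6 * int n - 1})
     - (\<Union>i\<in>{0..<m}. prism {0..6 * int n - 1} (3 * int i + 2, 2, 0))"

definition Tset :: "nat \<Rightarrow> nat \<Rightarrow> nat \<Rightarrow> nat \<Rightarrow> int \<Rightarrow> pt3 set" where
  "Tset n m t i j =
     (if t = 0 then prism (blockT alpha n) (3 * int i - 1, 2, -6 * j)
      else if t = 1 \<or> t = 5 then prism (blockT beta n) (3 * int i - 3 * int m - 3, 2, -6 * j)
      else if t = 2 then prism (blockT gamma n) (3 * int i - 1, -3, -6 * j)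
      else if t = 3 then prism (blockT beta n) (3 * int i + 3 * int m + 1, 2, -6 * j)
      else prism (blockT gamma n) (3 * int i - 1, 7, -6 * j))"

definition brick :: "nat \<Rightarrow> (nat \<times> pt3) list \<Rightarrow> pt3 set" where
  "brick n L =
     (let m = length L in
      empty_brick n m \<union>
      (\<Union>i\<in>{1..m}. (case L ! (i - 1) of (g, (a, b, c)) \<Rightarrow>
          Tset n m 0 i a \<union> Tset n m g i b \<union> Tset n m (g + 1) i c)))"

end

theory Submission
  imports Defs
begin

text \<open>
  Label each lattice column s by the height of its brick, divided by 6 and reduced mod n.
  Every column carries a brick. Otherwise a filler covers the centre of its first tube;
  the centre of that filler lies on the ring of the tube and is covered by a brick, and
  bricks cover a tube ring at a given height completely or not at all, so that brick
  collides with the filler. Bricks in one column agree mod 6n, so the labels are well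
  defined. If the labels around s formed a forbidden triple, the blockers that the three
  bricks around s put into the corresponding tube would be in phase. Then the ring cell
  just above the tube centre is free at relative height n (no blocker height is n mod 6n,
  as n is odd) but covered at heights 0 (by \<alpha>) and 2n (by \<gamma>). As the tube centre
  and the wall behind the free cell are solid, a filler covering it is centred on the
  tube, and its second layer hits one of these two blockers.
\<close>

lemma padd_simp [simp]: "padd (a, b, c) (x, y, z) = (a + x, b + y, c + z)"
  by (simp add: padd_def)

lemma abs_le_1_iff: "\<bar>a :: int\<bar> \<le> 1 \<longleftrightarrow> a \<in> {-1, 0, 1}"
  by auto

lemma Osq_iff: "(a, b) \<in> Osq \<longleftrightarrow> \<bar>a\<bar> \<le> 1 \<and> \<bar>b\<bar> \<le> 1 \<and> (a, b) \<noteq> (0, 0)"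
  unfolding Osq_def abs_le_1_iff by blast

lemma Osq_translate_in_Osq:
  assumes "(a, b) \<in> Osq"
  obtains c d where "(c, d) \<in> Osq" "(a + c, b + d) \<in> Osq"
proof (cases "a = 0")
  case True
  then show ?thesis using assms that[of 1 0] by (auto simp: Osq_iff)
next
  case False
  then show ?thesis using assms that[of "-a" 0] that[of 0 1] by (cases "b = 0") (auto simp: Osq_iff)
qed

lemma zero_notin_Osq [simp]: "(0, 0) \<notin> Osq"
  by (simp add: Osq_def)

lemma Osq_subset_box: "v \<in> Osq \<Longrightarrow> v \<in> {-1, 0, 1} \<times> {-1, 0, 1}"
  unfolding Osq_def by blast

lemma prism_iff: "(x, y, z) \<in> prism A (vx, vy, vz) \<longleftrightarrow> (x - vx, y - vy) \<in> Osq \<and> z - vz \<in> A"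
proof
  assume "(x, y, z) \<in> prism A (vx, vy, vz)"
  then show "(x - vx, y - vy) \<in> Osq \<and> z - vz \<in> A" unfolding prism_def by auto
next
  assume "(x - vx, y - vy) \<in> Osq \<and> z - vz \<in> A"
  moreover have "(x, y, z) = padd (x - vx, y - vy, z - vz) (vx, vy, vz)" by simp
  ultimately show "(x, y, z) \<in> prism A (vx, vy, vz)" unfolding prism_def by blast
qed

lemma msum_iff: "e \<in> msum A B \<longleftrightarrow> (\<exists>a\<in>A. \<exists>b\<in>B. e = padd a b)"
  unfolding msum_def by blast

lemma msumI: "a \<in> A \<Longrightarrow> b \<in> B \<Longrightarrow> e = padd a b \<Longrightarrow> e \<in> msum A B"
  unfolding msum_def by blast

lemma non_overlappingD:
  assumes "non_overlapping A B" "a1 \<in> A" "b1 \<in> B" "a2 \<in> A" "b2 \<in> B" "padd a1 b1 = padd a2 b2"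
  shows "a1 = a2" "b1 = b2"
  using assms unfolding non_overlapping_def by blast+

lemma padd_cancel_ex: "\<exists>q. padd w q = p"
proof -
  obtain a b c x y z where "w = (a, b, c)" "p = (x, y, z)" by (cases w, cases p)
  then show ?thesis by (intro exI[of _ "(x - a, y - b, z - c)"]) simp
qed

lemma padd_left_cancel: "padd w q = padd w q' \<longleftrightarrow> q = q'"
  by (cases w, cases q, cases q') auto

lemma filler_iff: "(a, b, c) \<in> filler n \<longleftrightarrow> (a, b) \<in> Osq \<and> (c = 0 \<or> c = int n)"
  unfolding filler_def by (simp add: prism_iff)

section \<open>Filler tilings\<close>

lemma prism_centre_not_covered:
  assumes disjoint: "non_overlapping W (prism A (0, 0, 0))" and "w \<in> W" "r \<in> A"
  shows "padd w (0, 0, r) \<notin> msum W (prism A (0, 0, 0))"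
proof
  assume "padd w (0, 0, r) \<in> msum W (prism A (0, 0, 0))"
  then obtain w' a b r' where w': "w' \<in> W" "(a, b) \<in> Osq" "r' \<in> A"
    and eq: "padd w (0, 0, r) = padd w' (a, b, r')"
    by (auto simp: msum_iff prism_def)
  obtain c d where cd: "(c, d) \<in> Osq" "(a + c, b + d) \<in> Osq"
    using Osq_translate_in_Osq[OF w'(2)] .
  have "padd w (c, d, r) = padd w' (a + c, b + d, r')"
    using eq by (cases w; cases w') auto
  moreover have "(c, d, r) \<in> prism A (0, 0, 0)" "(a + c, b + d, r') \<in> prism A (0, 0, 0)"
    using cd \<open>r \<in> A\<close> w'(3) by (simp_all add: prism_iff)
  ultimately have "(c, d, r) = (a + c, b + d, r')"
    using non_overlappingD(2)[OF disjoint \<open>w \<in> W\<close> _ w'(1)] by blast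
  then show False using w'(2) by (simp add: Osq_iff)
qed

lemma filler_covers_hole:
  assumes "msum W (filler n) = UNIV - S" "(x, y, z) \<notin> S"
  obtains wx wy wz a b r where "(wx, wy, wz) \<in> W" "(a, b) \<in> Osq" "r = 0 \<or> r = int n"
    "(x, y, z) = (wx + a, wy + b, wz + r)"
proof -
  have "(x, y, z) \<in> msum W (filler n)" using assms by simp
  then obtain w f where w: "w \<in> W" and f: "f \<in> filler n" and eq: "(x, y, z) = padd w f"
    unfolding msum_iff by blast
  obtain wx wy wz a b r where "w = (wx, wy, wz)" "f = (a, b, r)" by (cases w, cases f)
  with w f eq show ?thesis by (intro that) (auto simp: filler_iff)
qed

lemma filler_hole_ring:
  assumes disjoint: "non_overlapping W (filler n)" and tiling: "msum W (filler n) = UNIV - S"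
    and hole: "(x, y, z) \<notin> S"
  obtains a b a' b' where "(a, b) \<in> Osq" "(x + a, y + b, z) \<in> S"
    "(a', b') \<in> Osq" "(x + a', y + b', z) \<notin> S"
proof -
  obtain wx wy wz a b r where w: "(wx, wy, wz) \<in> W" and ab: "(a, b) \<in> Osq"
    and r: "r = 0 \<or> r = int n" and eq: "(x, y, z) = (wx + a, wy + b, wz + r)"
    using filler_covers_hole[OF tiling hole] .
  have "padd (wx, wy, wz) (0, 0, r) \<notin> msum W (filler n)"
    using prism_centre_not_covered[OF disjoint[unfolded filler_def] w] r
    by (auto simp: filler_def)
  then have centre: "(x + - a, y + - b, z) \<in> S" using tiling eq by auto
  have "(- a, - b) \<in> Osq" using ab by (simp add: Osq_iff)
  then obtain c d where cd: "(c, d) \<in> Osq" "(- a + c, - b + d) \<in> Osq"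
    by (rule Osq_translate_in_Osq)
  have "(c, d, r) \<in> filler n" using cd r by (simp add: filler_iff)
  then have "padd (wx, wy, wz) (c, d, r) \<in> msum W (filler n)" by (rule msumI[OF w]) simp
  then have "(x + (- a + c), y + (- b + d), z) \<notin> S" using tiling eq by auto
  with \<open>(- a, - b) \<in> Osq\<close> centre cd(2) show ?thesis by (rule that)
qed

text \<open>
  Any filler ring through the hole other than the one centred on (x, y) contains one of
  the three solid cells.
\<close>

lemma filler_over_hole:
  assumes tiling: "msum W (filler n) = UNIV - S"
    and hole: "(x, y + 1, z) \<notin> S"
    and solid: "\<And>z. (x, y, z) \<in> S" "\<And>z. (x, y + 2, z) \<in> S" "\<And>z. (x + 1, y + 2, z) \<in> S"
  shows "(x, y + 1, z - int n) \<notin> S \<or> (x, y + 1, z + int n) \<notin> S"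
proof -
  obtain wx wy wz a b r where w: "(wx, wy, wz) \<in> W" and ab: "(a, b) \<in> Osq"
    and r: "r = 0 \<or> r = int n" and eq: "(x, y + 1, z) = (wx + a, wy + b, wz + r)"
    using filler_covers_hole[OF tiling hole] .
  have free: "(wx + c, wy + d, wz + r') \<notin> S" if "(c, d) \<in> Osq" "r' = 0 \<or> r' = int n" for c d r'
  proof -
    have "(c, d, r') \<in> filler n" using that by (simp add: filler_iff)
    then have "padd (wx, wy, wz) (c, d, r') \<in> msum W (filler n)" by (rule msumI[OF w]) simp
    then show ?thesis using tiling by auto
  qed
  have ab_bounds: "\<bar>a\<bar> \<le> 1" "\<bar>b\<bar> \<le> 1" using ab by (auto simp: Osq_iff)
  consider "(a, b) = (0, 1)" | "b \<ge> 0" "(a, b) \<noteq> (0, 1)" | "b = -1" "a \<noteq> 0" | "b = -1" "a = 0"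
    using ab_bounds by linarith
  then show ?thesis
  proof cases
    case 1
    then show ?thesis using r free[of 0 1 "int n"] free[of 0 1 0] eq by (auto simp: Osq_iff)
  next
    case 2
    then have "(a, b - 1) \<in> Osq" using ab_bounds by (auto simp: Osq_iff)
    moreover have "(wx + a, wy + (b - 1), wz + r) = (x, y, z)" using eq by simp
    ultimately show ?thesis using free[OF _ r] solid(1) by metis
  next
    case 3
    then have "(a, 0) \<in> Osq" using ab_bounds by (auto simp: Osq_iff)
    moreover have "(wx + a, wy + 0, wz + r) = (x, y + 2, z)" using eq 3 by simp
    ultimately show ?thesis using free[OF _ r] solid(2) by metis
  next
    case 4
    have "(1, 0) \<in> Osq" by (simp add: Osq_iff)
    moreover have "(wx + 1, wy + 0, wz + r) = (x + 1, y + 2, z)" using eq 4 by simp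
    ultimately show ?thesis using free[OF _ r] solid(3) by metis
  qed
qed

section \<open>Vertically periodic sets\<close>

lemma periodic_shift:
  assumes periodic: "(\<lambda>p. padd p (0, 0, c)) ` W = W" and "(x, y, z) \<in> W"
  shows "(x, y, z + c * k) \<in> W"
proof (induction k rule: int_induct[where k = 0])
  case base
  then show ?case using assms(2) by simp
next
  case (step1 i)
  have "padd (x, y, z + c * i) (0, 0, c) \<in> (\<lambda>p. padd p (0, 0, c)) ` W"
    using step1(2) by (rule imageI)
  then show ?case unfolding periodic by (simp add: algebra_simps)
next
  case (step2 i)
  have "(x, y, z + c * i) \<in> (\<lambda>p. padd p (0, 0, c)) ` W" unfolding periodic by (rule step2(2))
  then obtain p where "(x, y, z + c * i) = padd p (0, 0, c)" "p \<in> W" by (rule imageE)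
  then show ?case by (cases p) (simp add: algebra_simps)
qed

lemma periodic_mem_mod:
  assumes periodic: "(\<lambda>p. padd p (0, 0, c)) ` W = W" and "(x, y, z) \<in> W" "z mod c = z' mod c"
  shows "(x, y, z') \<in> W"
proof -
  obtain k where "z' - z = c * k" using assms(3) by (metis mod_eq_dvd_iff dvdE)
  then show ?thesis using periodic_shift[OF assms(1,2), of k] by (simp add: algebra_simps)
qed

lemma periodic_column_mod:
  assumes periodic: "(\<lambda>p. padd p (0, 0, c)) ` W = W" and disjoint: "non_overlapping W B"
    and column: "\<And>d. 0 \<le> d \<Longrightarrow> d < c \<Longrightarrow> (0, 0, d) \<in> B"
    and "c > 0" "(x, y, z1) \<in> W" "(x, y, z2) \<in> W"
  shows "z1 mod c = z2 mod c"
proof -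
  define d where "d = (z2 - z1) mod c"
  have "(x, y, z1 + d) \<in> W"
    using periodic_mem_mod[OF periodic assms(6)] unfolding d_def by (simp add: mod_add_right_eq)
  moreover have "padd (x, y, z1 + d) (0, 0, 0) = padd (x, y, z1) (0, 0, d)" by simp
  moreover have "(0, 0, 0) \<in> B" "(0, 0, d) \<in> B" using column \<open>c > 0\<close> by (simp_all add: d_def)
  ultimately have "d = 0"
    using non_overlappingD(2)[OF disjoint _ _ \<open>(x, y, z1) \<in> W\<close>] by blast
  then have "c dvd z2 - z1" unfolding d_def by (simp add: dvd_eq_mod_eq_0)
  then show ?thesis by (simp add: mod_eq_dvd_iff dvd_diff_commute)
qed

section \<open>Cells of a brick\<close>

lemma mult_eq_small_imp_zero:
  assumes "(k :: int) * N = e" "\<bar>e\<bar> < N"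
  shows "k = 0"
proof (rule ccontr)
  assume "k \<noteq> 0"
  moreover have "N > 0" using assms(2) by linarith
  ultimately have "N \<le> \<bar>k\<bar> * N" using mult_right_mono[of 1 "\<bar>k\<bar>" N] by simp
  then show False using assms by (simp add: abs_mult)
qed

lemma mult_3M2_eq_small_imp_zero:
  assumes "(k :: int) * (3 * M + 2) = 3 * d + e" "\<bar>d\<bar> < M" "\<bar>e\<bar> \<le> 2"
  shows "k = 0" "d = 0" "e = 0"
proof -
  have "\<bar>3 * d + e\<bar> < 3 * M + 2" using assms(2,3) by arith
  then show "k = 0" using mult_eq_small_imp_zero[OF assms(1)] by simp
  then show "d = 0" "e = 0" using assms(1,3) by presburger+
qed

text \<open>
  The prism Tset n m t i e of the brick in column s + nbr_dir t lies in the tube of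
  column s belonging to the i-th representative (see Tset_eq_prism); its pattern is
  blocker n t lowered by 6 e, where e = triple_entry t of that representative.
\<close>

definition nbr_dir :: "nat \<Rightarrow> int \<times> int" where
  "nbr_dir t = (if t = 0 then (0, 0) else uvec t)"

definition blocker :: "nat \<Rightarrow> nat \<Rightarrow> int set" where
  "blocker n t = (if t = 0 then blockT alpha n else if odd t then blockT beta n else blockT gamma n)"

definition triple_entry :: "nat \<Rightarrow> nat \<times> pt3 \<Rightarrow> int" where
  "triple_entry t x = (case x of (g, a, b, c) \<Rightarrow> if t = 0 then a else if t = g then b else c)"

text \<open>
  Columns are indexed by s \<in> \<int> \<times> \<int>. tube_cell m s j v z is the cell at offset v from the
  centre of the tube of representative j + 1 (counting representatives from 0 here)
  in the brick of column s, at height z.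
\<close>

definition brick_origin :: "nat \<Rightarrow> int \<times> int \<Rightarrow> int \<Rightarrow> pt3" where
  "brick_origin m s z = ((3 * int m + 2) * fst s, 5 * snd s, z)"

definition tube_cell :: "nat \<Rightarrow> int \<times> int \<Rightarrow> nat \<Rightarrow> int \<times> int \<Rightarrow> int \<Rightarrow> pt3" where
  "tube_cell m s j v z = ((3 * int m + 2) * fst s + 3 * int j + 2 + fst v, 5 * snd s + 2 + snd v, z)"

lemma Tset_eq_prism:
  assumes "t \<le> 5"
  shows "Tset n m t i j = prism (blocker n t)
    (3 * int i - 1 - (3 * int m + 2) * fst (nbr_dir t), 2 - 5 * snd (nbr_dir t), - 6 * j)"
proof -
  have "t = 0 \<or> t = 1 \<or> t = 2 \<or> t = 3 \<or> t = 4 \<or> t = 5" using assms by auto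
  then show ?thesis
    by (elim disjE) (simp_all add: Tset_def blocker_def nbr_dir_def uvec_def algebra_simps)
qed

lemma brick_eq:
  assumes "fst ` set L \<subseteq> {1..4}"
  shows "brick n L = empty_brick n (length L) \<union>
    (\<Union>i\<in>{1..length L}. \<Union>t\<in>{0, fst (L ! (i - 1)), fst (L ! (i - 1)) + 1}.
       Tset n (length L) t i (triple_entry t (L ! (i - 1))))"
proof -
  have "(case L ! (i - 1) of (g, a, b, c) \<Rightarrow>
          Tset n (length L) 0 i a \<union> Tset n (length L) g i b \<union> Tset n (length L) (g + 1) i c)
      = (\<Union>t\<in>{0, fst (L ! (i - 1)), fst (L ! (i - 1)) + 1}.
           Tset n (length L) t i (triple_entry t (L ! (i - 1))))"
    if "i \<in> {1..length L}" for i
  proof -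
    obtain g a b c where Li: "L ! (i - 1) = (g, a, b, c)" by (cases "L ! (i - 1)")
    have "g \<noteq> 0" using assms that Li nth_mem[of "i - 1" L] by force
    then show ?thesis using Li by (auto simp: triple_entry_def)
  qed
  then have tubes: "(\<Union>i\<in>{1..length L}. case L ! (i - 1) of (g, a, b, c) \<Rightarrow>
          Tset n (length L) 0 i a \<union> Tset n (length L) g i b \<union> Tset n (length L) (g + 1) i c)
      = (\<Union>i\<in>{1..length L}. \<Union>t\<in>{0, fst (L ! (i - 1)), fst (L ! (i - 1)) + 1}.
           Tset n (length L) t i (triple_entry t (L ! (i - 1))))"
    by (rule SUP_cong[OF refl])
  show ?thesis unfolding brick_def Let_def tubes ..
qed

text \<open>
  Bricks are 3m + 2 wide and tube centres lie 3 apart, so the offset of a tube cell from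
  a brick origin determines both the column of that brick and the tube.
\<close>

lemma empty_brick_cell_iff:
  assumes eq: "padd (brick_origin m s' wz) q = tube_cell m s j v z"
    and j: "j < m" and v: "v \<in> {-1, 0, 1} \<times> {-1, 0, 1}"
  shows "q \<in> empty_brick n m \<longleftrightarrow> s' = s \<and> v = (0, 0) \<and> 0 \<le> z - wz \<and> z - wz < 6 * int n"
proof -
  obtain X Y X' Y' v1 v2 where s: "s = (X, Y)" "s' = (X', Y')" "v = (v1, v2)"
    by (cases s, cases s', cases v)
  define qx where "qx = (3 * int m + 2) * (X - X') + 3 * int j + 2 + v1"
  define qy where "qy = 5 * (Y - Y') + 2 + v2"
  have q: "q = (qx, qy, z - wz)"
    using eq s unfolding qx_def qy_def
    by (cases q) (auto simp: brick_origin_def tube_cell_def algebra_simps)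
  have vb: "\<bar>v1\<bar> \<le> 1" "\<bar>v2\<bar> \<le> 1" using v s by auto
  let ?box = "{0..3 * int m + 1} \<times> {0..4} \<times> {0..6 * int n - 1}"
  let ?tube = "\<lambda>i. prism {0..6 * int n - 1} (3 * int i + 2, 2, 0)"
  have empty_brick_iff: "q \<in> empty_brick n m \<longleftrightarrow> q \<in> ?box \<and> (\<forall>i<m. q \<notin> ?tube i)"
    unfolding empty_brick_def by auto
  show ?thesis
  proof
    assume "q \<in> empty_brick n m"
    then have "q \<in> ?box" and not_tube: "q \<notin> ?tube j" using j empty_brick_iff by auto
    then have box: "0 \<le> qx" "qx \<le> 3 * int m + 1" "0 \<le> qy" "qy \<le> 4"
        "0 \<le> z - wz" "z - wz \<le> 6 * int n - 1"
      unfolding q by auto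
    have "(X - X') * (3 * int m + 2) = qx - 3 * int j - 2 - v1" unfolding qx_def by simp
    moreover have "\<bar>qx - 3 * int j - 2 - v1\<bar> < 3 * int m + 2" using box j vb by arith
    ultimately have X: "X' = X" using mult_eq_small_imp_zero by fastforce
    have "(Y - Y') * 5 = qy - 2 - v2" unfolding qy_def by simp
    moreover have "\<bar>qy - 2 - v2\<bar> \<le> 3" using box vb by arith
    ultimately have Y: "Y' = Y" by presburger
    have "(v1, v2) \<notin> Osq"
      using not_tube box(5,6) unfolding q qx_def qy_def X Y by (simp add: prism_iff)
    then have "v = (0, 0)" using s vb by (simp add: Osq_iff)
    then show "s' = s \<and> v = (0, 0) \<and> 0 \<le> z - wz \<and> z - wz < 6 * int n"
      using X Y s box by simp
  next
    assume "s' = s \<and> v = (0, 0) \<and> 0 \<le> z - wz \<and> z - wz < 6 * int n"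
    then have "qx = 3 * int j + 2" "qy = 2" "0 \<le> z - wz" "z - wz < 6 * int n"
      using s unfolding qx_def qy_def by auto
    moreover have "(3 * int j + 2 - (3 * int i + 2), 0) \<notin> Osq" for i
      unfolding Osq_iff prod.inject by presburger
    ultimately have "q \<in> ?box" "\<forall>i<m. q \<notin> ?tube i"
      using j unfolding q by (simp_all add: prism_iff)
    then show "q \<in> empty_brick n m" using empty_brick_iff by blast
  qed
qed

lemma empty_brick_boundary_rows:
  "0 \<le> x \<Longrightarrow> x \<le> 3 * int m + 1 \<Longrightarrow> y \<in> {0, 4} \<Longrightarrow> 0 \<le> d \<Longrightarrow> d < 6 * int n \<Longrightarrow>
    (x, y, d) \<in> empty_brick n m"
  unfolding empty_brick_def by (auto simp: prism_iff Osq_iff)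

lemma tube_centre_in_empty_brick:
  "j < m \<Longrightarrow> 0 \<le> d \<Longrightarrow> d < 6 * int n \<Longrightarrow> (3 * int j + 2, 2, d) \<in> empty_brick n m"
  using empty_brick_cell_iff[of m "(0, 0)" 0 "(3 * int j + 2, 2, d)" "(0, 0)" j "(0, 0)" d n]
  by (simp add: brick_origin_def tube_cell_def)

lemma Tset_cell_iff:
  assumes eq: "padd (brick_origin m s' wz) q = tube_cell m s j v z"
    and t: "t \<le> 5" and i: "i \<in> {1..m}" and j: "j < m" and v: "v \<in> {-1, 0, 1} \<times> {-1, 0, 1}"
  shows "q \<in> Tset n m t i e \<longleftrightarrow>
    s' = p2add s (nbr_dir t) \<and> i = Suc j \<and> v \<in> Osq \<and> z - wz + 6 * e \<in> blocker n t"
proof -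
  obtain X Y X' Y' v1 v2 dx dy where s: "s = (X, Y)" "s' = (X', Y')" "v = (v1, v2)"
    and d: "nbr_dir t = (dx, dy)"
    by (cases s, cases s', cases v, cases "nbr_dir t")
  define p where "p = (3 * int m + 2) * (X - X' + dx) + 3 * (int j + 1 - int i) + v1"
  define r where "r = 5 * (Y - Y' + dy) + v2"
  have q: "q = (p + 3 * int i - 1 - (3 * int m + 2) * dx, r + 2 - 5 * dy, z - wz)"
    using eq s unfolding p_def r_def
    by (cases q) (auto simp: brick_origin_def tube_cell_def algebra_simps)
  have "q \<in> Tset n m t i e \<longleftrightarrow> (p, r) \<in> Osq \<and> z - wz + 6 * e \<in> blocker n t"
    unfolding Tset_eq_prism[OF t] d q by (simp add: prism_iff)
  also have "\<dots> \<longleftrightarrow> s' = p2add s (nbr_dir t) \<and> i = Suc j \<and> v \<in> Osq \<and> z - wz + 6 * e \<in> blocker n t"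
  proof
    assume pr: "(p, r) \<in> Osq \<and> z - wz + 6 * e \<in> blocker n t"
    have vb: "\<bar>v1\<bar> \<le> 1" "\<bar>v2\<bar> \<le> 1" using v s by auto
    have "\<bar>p\<bar> \<le> 1" "\<bar>r\<bar> \<le> 1" using pr by (auto simp: Osq_iff)
    have "(X - X' + dx) * (3 * int m + 2) = 3 * (int i - int j - 1) + (p - v1)"
      unfolding p_def by (simp add: algebra_simps)
    moreover have "\<bar>int i - int j - 1\<bar> < int m" using i j by auto
    moreover have "\<bar>p - v1\<bar> \<le> 2" using \<open>\<bar>p\<bar> \<le> 1\<close> vb by arith
    ultimately have "X - X' + dx = 0" "int i - int j - 1 = 0" "p - v1 = 0"
      by (rule mult_3M2_eq_small_imp_zero)+
    then have x: "X' = X + dx" "i = Suc j" "p = v1" by simp_all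
    have "(Y - Y' + dy) * 5 = r - v2" unfolding r_def by (simp add: algebra_simps)
    moreover have "\<bar>r - v2\<bar> \<le> 2" using \<open>\<bar>r\<bar> \<le> 1\<close> vb by arith
    ultimately have y: "Y' = Y + dy" "r = v2" by presburger+
    show "s' = p2add s (nbr_dir t) \<and> i = Suc j \<and> v \<in> Osq \<and> z - wz + 6 * e \<in> blocker n t"
      using x y s d pr by (simp add: p2add_def)
  next
    assume "s' = p2add s (nbr_dir t) \<and> i = Suc j \<and> v \<in> Osq \<and> z - wz + 6 * e \<in> blocker n t"
    then show "(p, r) \<in> Osq \<and> z - wz + 6 * e \<in> blocker n t"
      using s d unfolding p_def r_def by (simp add: p2add_def)
  qed
  finally show ?thesis .
qed

lemma brick_cell_iff:
  assumes labels: "fst ` set L \<subseteq> {1..4}" and j: "j < length L"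
    and v: "v \<in> {-1, 0, 1} \<times> {-1, 0, 1}"
    and eq: "padd (brick_origin (length L) s' wz) q = tube_cell (length L) s j v z"
  shows "q \<in> brick n L \<longleftrightarrow>
    s' = s \<and> v = (0, 0) \<and> 0 \<le> z - wz \<and> z - wz < 6 * int n \<or>
    v \<in> Osq \<and> (\<exists>t\<in>{0, fst (L ! j), fst (L ! j) + 1}.
      s' = p2add s (nbr_dir t) \<and> z - wz + 6 * triple_entry t (L ! j) \<in> blocker n t)"
    (is "_ \<longleftrightarrow> _ \<or> ?tube")
proof -
  let ?m = "length L"
  have Tset_iff: "q \<in> Tset n ?m t i e \<longleftrightarrow>
      s' = p2add s (nbr_dir t) \<and> i = Suc j \<and> v \<in> Osq \<and> z - wz + 6 * e \<in> blocker n t"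
    if "i \<in> {1..?m}" "t \<in> {0, fst (L ! (i - 1)), fst (L ! (i - 1)) + 1}" for i t e
  proof (rule Tset_cell_iff[OF eq _ that(1) j v])
    show "t \<le> 5" using that labels nth_mem[of "i - 1" L] by force
  qed
  have "q \<in> (\<Union>i\<in>{1..?m}. \<Union>t\<in>{0, fst (L ! (i - 1)), fst (L ! (i - 1)) + 1}.
      Tset n ?m t i (triple_entry t (L ! (i - 1)))) \<longleftrightarrow> ?tube"
  proof
    assume "q \<in> (\<Union>i\<in>{1..?m}. \<Union>t\<in>{0, fst (L ! (i - 1)), fst (L ! (i - 1)) + 1}.
      Tset n ?m t i (triple_entry t (L ! (i - 1))))"
    then obtain i t where "i \<in> {1..?m}" "t \<in> {0, fst (L ! (i - 1)), fst (L ! (i - 1)) + 1}"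
      "q \<in> Tset n ?m t i (triple_entry t (L ! (i - 1)))" by blast
    with Tset_iff show ?tube by auto
  next
    assume ?tube
    then obtain t where t: "t \<in> {0, fst (L ! j), fst (L ! j) + 1}"
      and "s' = p2add s (nbr_dir t)" "v \<in> Osq" "z - wz + 6 * triple_entry t (L ! j) \<in> blocker n t"
      by blast
    then have "q \<in> Tset n ?m t (Suc j) (triple_entry t (L ! j))" using Tset_iff[of "Suc j" t] j by simp
    then show "q \<in> (\<Union>i\<in>{1..?m}. \<Union>t\<in>{0, fst (L ! (i - 1)), fst (L ! (i - 1)) + 1}.
      Tset n ?m t i (triple_entry t (L ! (i - 1))))" using t j by force
  qed
  then show ?thesis unfolding brick_eq[OF labels] using empty_brick_cell_iff[OF eq j v] by blast
qed

lemma msum_lattice_iff: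
  assumes "W \<subseteq> {brick_origin m s z | s z. True}"
  shows "p \<in> msum W B \<longleftrightarrow>
    (\<exists>s' wz. brick_origin m s' wz \<in> W \<and> (\<exists>q. q \<in> B \<and> padd (brick_origin m s' wz) q = p))"
proof
  assume "p \<in> msum W B"
  then obtain w q where w: "w \<in> W" and q: "q \<in> B" and eq: "p = padd w q"
    unfolding msum_iff by blast
  obtain s' wz where "w = brick_origin m s' wz" using w assms by blast
  with w q eq show "\<exists>s' wz. brick_origin m s' wz \<in> W \<and> (\<exists>q. q \<in> B \<and> padd (brick_origin m s' wz) q = p)"
    by blast
next
  assume "\<exists>s' wz. brick_origin m s' wz \<in> W \<and> (\<exists>q. q \<in> B \<and> padd (brick_origin m s' wz) q = p)"
  then show "p \<in> msum W B" by (metis msumI)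
qed

lemma tube_cell_in_msum_brick_iff:
  assumes lattice: "W \<subseteq> {brick_origin (length L) s z | s z. True}"
    and labels: "fst ` set L \<subseteq> {1..4}" and j: "j < length L"
    and v: "v \<in> {-1, 0, 1} \<times> {-1, 0, 1}"
  shows "tube_cell (length L) s j v z \<in> msum W (brick n L) \<longleftrightarrow>
    v = (0, 0) \<and> (\<exists>wz. brick_origin (length L) s wz \<in> W \<and> 0 \<le> z - wz \<and> z - wz < 6 * int n) \<or>
    v \<in> Osq \<and> (\<exists>t\<in>{0, fst (L ! j), fst (L ! j) + 1}. \<exists>wz.
       brick_origin (length L) (p2add s (nbr_dir t)) wz \<in> W \<and>
       z - wz + 6 * triple_entry t (L ! j) \<in> blocker n t)"
    (is "?c \<in> _ \<longleftrightarrow> _")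
proof -
  have cell: "(\<exists>q. q \<in> brick n L \<and> padd (brick_origin (length L) s' wz) q = ?c) \<longleftrightarrow>
      s' = s \<and> v = (0, 0) \<and> 0 \<le> z - wz \<and> z - wz < 6 * int n \<or>
      v \<in> Osq \<and> (\<exists>t\<in>{0, fst (L ! j), fst (L ! j) + 1}.
        s' = p2add s (nbr_dir t) \<and> z - wz + 6 * triple_entry t (L ! j) \<in> blocker n t)"
    for s' wz
  proof -
    obtain q where eq: "padd (brick_origin (length L) s' wz) q = ?c" using padd_cancel_ex by blast
    have unique: "padd (brick_origin (length L) s' wz) q' = ?c \<longleftrightarrow> q' = q" for q'
      unfolding eq[symmetric] padd_left_cancel by blast
    have "(\<exists>q'. q' \<in> brick n L \<and> padd (brick_origin (length L) s' wz) q' = ?c) \<longleftrightarrow>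
        q \<in> brick n L" by (simp only: unique) blast
    then show ?thesis unfolding brick_cell_iff[OF labels j v eq] .
  qed
  show ?thesis unfolding msum_lattice_iff[OF lattice] cell
    by blast
qed

section \<open>Blockers\<close>

lemma blocker_elem:
  assumes "u \<in> blocker n t"
  obtains i x where "i < n" "u = int n * x + 6 * int i"
    "i = 0 \<and> x \<in> {0, 2, 3, 5} \<or> i \<noteq> 0 \<and> x \<in> {1, 4}"
  using assms that unfolding blocker_def blockT_def alpha_def beta_def gamma_def delta_def
  by (auto split: if_splits)

lemma blocker_not_cong_n:
  assumes "u \<in> blocker n t" "odd n"
  shows "u mod (6 * int n) \<noteq> int n mod (6 * int n)"
proof
  assume "u mod (6 * int n) = int n mod (6 * int n)"
  then have dvd: "6 * int n dvd u - int n" by (simp only: mod_eq_dvd_iff)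
  obtain i x where i: "i < n" and u: "u = int n * x + 6 * int i"
    and x: "i = 0 \<and> x \<in> {0, 2, 3, 5} \<or> i \<noteq> 0 \<and> x \<in> {1, 4}"
    using assms(1) by (rule blocker_elem)
  have n: "int n > 0" using \<open>odd n\<close> by (cases n) auto
  from x show False
  proof (elim disjE conjE)
    assume "i = 0" "x \<in> {0, 2, 3, 5}"
    then have "x = 0 \<or> x = 2 \<or> x = 3 \<or> x = 5" by simp
    moreover have "int n * 6 dvd int n * (x - 1)" using dvd u \<open>i = 0\<close> by (simp add: algebra_simps)
    then have "6 dvd x - 1" using n by simp
    ultimately show False by presburger
  next
    assume "i \<noteq> 0" "x \<in> {1, 4}"
    then consider "x = 1" | "x = 4" by blast
    then show False
    proof cases
      case 1
      then have "int n dvd int i" using dvd u by simp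
      then show False using i \<open>i \<noteq> 0\<close> by (auto dest: dvd_imp_le)
    next
      case 2
      then have "6 * int n dvd 3 * int n + 6 * int i" using dvd u by (simp add: algebra_simps)
      then have "2 dvd 3 * int n + 6 * int i" by (rule dvd_trans[rotated]) simp
      then show False using \<open>odd n\<close> by presburger
    qed
  qed
qed

lemma zero_in_blocker: "n > 0 \<Longrightarrow> 0 \<in> blocker n 0"
  unfolding blocker_def blockT_def alpha_def delta_def by force

lemma two_n_in_blocker: "n > 0 \<Longrightarrow> t \<noteq> 0 \<Longrightarrow> even t \<Longrightarrow> 2 * int n \<in> blocker n t"
  unfolding blocker_def blockT_def gamma_def delta_def by force

section \<open>Tilings by bricks and fillers\<close>

locale brick_filler_tiling =
  fixes n :: nat and L :: "(nat \<times> pt3) list" and W W' :: "pt3 set"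
  assumes odd_n: "odd n"
    and labels: "fst ` set L \<subseteq> {1..4}"
    and lattice: "W \<subseteq> {((3 * int (length L) + 2) * x, 5 * y, 6 * z) | x y z. True}"
    and periodic: "(\<lambda>p. padd p (0, 0, 6 * int n)) ` W = W"
    and bricks_disjoint: "non_overlapping W (brick n L)"
    and fillers_disjoint: "non_overlapping W' (filler n)"
    and fillers_complement: "msum W' (filler n) = UNIV - msum W (brick n L)"
begin

abbreviation bricks :: "pt3 set" where
  "bricks \<equiv> msum W (brick n L)"

lemma n_pos: "n > 0"
  using odd_n by (cases n) auto

lemma tube_cell_in_bricks_iff:
  assumes "j < length L" "v \<in> {-1, 0, 1} \<times> {-1, 0, 1}"
  shows "tube_cell (length L) s j v z \<in> bricks \<longleftrightarrow>
    v = (0, 0) \<and> (\<exists>wz. brick_origin (length L) s wz \<in> W \<and> 0 \<le> z - wz \<and> z - wz < 6 * int n) \<or>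
    v \<in> Osq \<and> (\<exists>t\<in>{0, fst (L ! j), fst (L ! j) + 1}. \<exists>wz.
       brick_origin (length L) (p2add s (nbr_dir t)) wz \<in> W \<and>
       z - wz + 6 * triple_entry t (L ! j) \<in> blocker n t)"
proof (rule tube_cell_in_msum_brick_iff[OF _ labels assms])
  show "W \<subseteq> {brick_origin (length L) s z | s z. True}"
    using lattice by (force simp: brick_origin_def)
qed

lemma height_dvd_6: "brick_origin (length L) s z \<in> W \<Longrightarrow> 6 dvd z"
  using lattice by (auto simp: brick_origin_def)

lemma column_heights_cong:
  assumes "brick_origin (length L) s z1 \<in> W" "brick_origin (length L) s z2 \<in> W"
  shows "z1 mod (6 * int n) = z2 mod (6 * int n)"
proof (rule periodic_column_mod[OF periodic bricks_disjoint])
  show "(0, 0, d) \<in> brick n L" if "0 \<le> d" "d < 6 * int n" for d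
    using empty_brick_boundary_rows[of 0 "length L" 0 d n] that unfolding brick_eq[OF labels] by simp
qed (use assms n_pos in \<open>auto simp: brick_origin_def\<close>)

lemma column_solid:
  assumes "brick_origin (length L) s wz \<in> W"
    and "\<And>d. 0 \<le> d \<Longrightarrow> d < 6 * int n \<Longrightarrow> (x, y, d) \<in> brick n L"
  shows "padd (brick_origin (length L) s z) (x, y, 0) \<in> bricks"
proof -
  define wz' where "wz' = z - (z - wz) mod (6 * int n)"
  have "brick_origin (length L) s wz' \<in> W"
    using periodic_mem_mod[OF periodic assms(1)[unfolded brick_origin_def]]
    unfolding wz'_def brick_origin_def by (simp add: mod_diff_right_eq)
  moreover have "(x, y, z - wz') \<in> brick n L"
    using assms(2) n_pos unfolding wz'_def by simp
  ultimately show ?thesis by (rule msumI) (simp add: brick_origin_def wz'_def)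
qed

lemma tube_ring_in_bricks_iff:
  assumes "j < length L" "v \<in> Osq" "v' \<in> Osq"
  shows "tube_cell (length L) s j v z \<in> bricks \<longleftrightarrow> tube_cell (length L) s j v' z \<in> bricks"
proof -
  have "v \<noteq> (0, 0)" "v' \<noteq> (0, 0)" using assms(2,3) by auto
  then show ?thesis
    using tube_cell_in_bricks_iff[OF assms(1) Osq_subset_box, OF assms(2)]
      tube_cell_in_bricks_iff[OF assms(1) Osq_subset_box, OF assms(3)] assms(2,3)
    by simp
qed

lemma column_occupied:
  assumes "L \<noteq> []"
  shows "\<exists>wz. brick_origin (length L) s wz \<in> W"
proof (rule ccontr)
  assume empty: "\<nexists>wz. brick_origin (length L) s wz \<in> W"
  have j: "0 < length L" using assms by simp
  obtain x y where c: "\<And>a b z. tube_cell (length L) s 0 (a, b) z = (x + a, y + b, z)"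
    by (auto simp: tube_cell_def)
  have "tube_cell (length L) s 0 (0, 0) 0 \<notin> bricks"
    using tube_cell_in_bricks_iff[OF j, of "(0, 0)"] empty by simp
  then have "(x, y, 0) \<notin> bricks" using c[of 0 0 0] by simp
  then obtain a b a' b' where ab: "(a, b) \<in> Osq" "(x + a, y + b, 0) \<in> bricks"
      and ab': "(a', b') \<in> Osq" "(x + a', y + b', 0) \<notin> bricks"
    by (rule filler_hole_ring[OF fillers_disjoint fillers_complement])
  have "tube_cell (length L) s 0 (a, b) 0 \<in> bricks" using ab(2) c by simp
  then have "tube_cell (length L) s 0 (a', b') 0 \<in> bricks"
    using tube_ring_in_bricks_iff[OF j ab(1) ab'(1)] by blast
  then show False using ab'(2) c by simp
qed

definition column_label :: "int \<times> int \<Rightarrow> int" where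
  "column_label s = ((SOME z. brick_origin (length L) s z \<in> W) div 6) mod int n"

lemma column_label_range: "0 \<le> column_label s \<and> column_label s < int n"
  using n_pos by (simp add: column_label_def)

lemma column_label_cong:
  assumes "L \<noteq> []" "brick_origin (length L) s wz \<in> W"
  shows "wz mod (6 * int n) = 6 * column_label s"
proof -
  define h where "h = (SOME z. brick_origin (length L) s z \<in> W)"
  have h: "brick_origin (length L) s h \<in> W"
    unfolding h_def using column_occupied[OF assms(1)] by (rule someI_ex)
  then obtain H where H: "h = 6 * H" using height_dvd_6 by blast
  have "wz mod (6 * int n) = h mod (6 * int n)" using column_heights_cong[OF assms(2) h] .
  also have "\<dots> = 6 * (H mod int n)" unfolding H by (rule mod_mult_mult1)
  finally show ?thesis by (simp add: column_label_def h_def[symmetric] H)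
qed

text \<open>
  The blockers that the three bricks around tube j of column s put into it are in phase
  (as they are when the labels around s form the forbidden triple of representative j).
\<close>

definition aligned_at :: "int \<times> int \<Rightarrow> nat \<Rightarrow> int \<Rightarrow> bool" where
  "aligned_at s j h \<longleftrightarrow> (\<forall>t\<in>{0, fst (L ! j), fst (L ! j) + 1}. \<forall>wz.
     brick_origin (length L) (p2add s (nbr_dir t)) wz \<in> W \<longrightarrow>
     (wz - 6 * triple_entry t (L ! j)) mod (6 * int n) = h mod (6 * int n))"

lemma column_labels_aligned:
  assumes j: "j < length L"
    and label: "\<And>t. t \<in> {0, fst (L ! j), fst (L ! j) + 1} \<Longrightarrow>
      column_label (p2add s (nbr_dir t)) = (triple_entry t (L ! j) + k) mod int n"
  shows "aligned_at s j (6 * k)"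
  unfolding aligned_at_def
proof (intro ballI allI impI)
  fix t wz
  let ?e = "triple_entry t (L ! j)"
  assume t: "t \<in> {0, fst (L ! j), fst (L ! j) + 1}"
    and w: "brick_origin (length L) (p2add s (nbr_dir t)) wz \<in> W"
  have "L \<noteq> []" using j by auto
  then have "wz mod (6 * int n) = 6 * column_label (p2add s (nbr_dir t))"
    using w by (rule column_label_cong)
  also have "\<dots> = 6 * ((?e + k) mod int n)" using label[OF t] by simp
  also have "\<dots> = (6 * ?e + 6 * k) mod (6 * int n)"
    by (metis distrib_left mod_mult_mult1)
  finally show "(wz - 6 * ?e) mod (6 * int n) = 6 * k mod (6 * int n)"
    by (metis mod_diff_left_eq add_diff_cancel_left')
qed

lemma aligned_hole_not_in_bricks:
  assumes j: "j < length L" and aligned: "aligned_at s j h"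
  shows "tube_cell (length L) s j (0, 1) (h + int n) \<notin> bricks"
proof
  assume "tube_cell (length L) s j (0, 1) (h + int n) \<in> bricks"
  then obtain t wz where t: "t \<in> {0, fst (L ! j), fst (L ! j) + 1}"
    and w: "brick_origin (length L) (p2add s (nbr_dir t)) wz \<in> W"
    and u: "h + int n - wz + 6 * triple_entry t (L ! j) \<in> blocker n t"
    using tube_cell_in_bricks_iff[OF j, of "(0, 1)"] by auto
  have "(wz - 6 * triple_entry t (L ! j)) mod (6 * int n) = h mod (6 * int n)"
    using aligned t w unfolding aligned_at_def by blast
  then have "6 * int n dvd h - (wz - 6 * triple_entry t (L ! j))"
    by (simp only: mod_eq_dvd_iff dvd_diff_commute)
  then have "(h + int n - wz + 6 * triple_entry t (L ! j)) mod (6 * int n) = int n mod (6 * int n)"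
    unfolding mod_eq_dvd_iff by (simp add: algebra_simps)
  then show False using blocker_not_cong_n[OF u odd_n] by contradiction
qed

lemma aligned_ring_in_bricks:
  assumes j: "j < length L" and aligned: "aligned_at s j h"
    and t: "t \<in> {0, fst (L ! j), fst (L ! j) + 1}" and u: "u \<in> blocker n t" and v: "v \<in> Osq"
  shows "tube_cell (length L) s j v (h + u) \<in> bricks"
proof -
  let ?e = "triple_entry t (L ! j)" and ?s = "p2add s (nbr_dir t)"
  have "L \<noteq> []" using j by auto
  then obtain wz where w: "brick_origin (length L) ?s wz \<in> W" using column_occupied by blast
  have "(wz - 6 * ?e) mod (6 * int n) = h mod (6 * int n)"
    using aligned t w unfolding aligned_at_def by blast
  then have "wz mod (6 * int n) = (h + 6 * ?e) mod (6 * int n)"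
    by (metis mod_add_left_eq diff_add_cancel)
  then have "brick_origin (length L) ?s (h + 6 * ?e) \<in> W"
    using periodic_mem_mod[OF periodic w[unfolded brick_origin_def]] by (simp add: brick_origin_def)
  moreover have "h + u - (h + 6 * ?e) + 6 * ?e \<in> blocker n t" using u by simp
  ultimately show ?thesis
    unfolding tube_cell_in_bricks_iff[OF j Osq_subset_box[OF v]] using t v by blast
qed

lemma tube_centre_and_wall_in_bricks:
  assumes j: "j < length L" and ab: "(a, b) \<in> {(0, 0), (0, 2), (1, 2)}"
  shows "tube_cell (length L) s j (a, b) z \<in> bricks"
proof -
  have "L \<noteq> []" using j by auto
  then obtain wz where wz: "brick_origin (length L) s wz \<in> W" using column_occupied by blast
  have "(3 * int j + 2 + a, 2 + b, d) \<in> brick n L" if "0 \<le> d" "d < 6 * int n" for d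
    using ab tube_centre_in_empty_brick[OF j that] empty_brick_boundary_rows[OF _ _ _ that] j
    unfolding brick_eq[OF labels] by auto
  then have "padd (brick_origin (length L) s z) (3 * int j + 2 + a, 2 + b, 0) \<in> bricks"
    by (rule column_solid[OF wz])
  then show ?thesis by (simp add: brick_origin_def tube_cell_def add.assoc)
qed

lemma no_aligned_tube:
  assumes j: "j < length L"
  shows "\<not> aligned_at s j h"
proof
  assume aligned: "aligned_at s j h"
  obtain x y where cell: "\<And>a b z. tube_cell (length L) s j (a, b) z = (x + a, y + b, z)"
    by (auto simp: tube_cell_def)
  have centre: "(x, y, z) \<in> bricks" for z
    using tube_centre_and_wall_in_bricks[OF j, of 0 0 s z] cell[of 0 0 z] by simp
  have walls: "(x, y + 2, z) \<in> bricks" "(x + 1, y + 2, z) \<in> bricks" for z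
    using tube_centre_and_wall_in_bricks[OF j, of 0 2 s z] cell[of 0 2 z]
      tube_centre_and_wall_in_bricks[OF j, of 1 2 s z] cell[of 1 2 z] by simp_all
  have "(x, y + 1, h + int n) \<notin> bricks"
    using aligned_hole_not_in_bricks[OF j aligned] cell[where a = 0 and b = 1] by simp
  from filler_over_hole[OF fillers_complement this centre walls]
  have "(x, y + 1, h) \<notin> bricks \<or> (x, y + 1, h + 2 * int n) \<notin> bricks"
    unfolding add_diff_cancel_right' add.assoc mult_2 .
  moreover have "(x, y + 1, h) \<in> bricks"
    using aligned_ring_in_bricks[OF j aligned _ zero_in_blocker[OF n_pos], of "(0, 1)"]
      cell[where a = 0 and b = 1] by (simp add: Osq_iff)
  moreover obtain t where t: "t \<in> {0, fst (L ! j), fst (L ! j) + 1}" "t \<noteq> 0" "even t"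
  proof -
    have "fst (L ! j) \<in> {1..4}" using labels j nth_mem[of j L] by force
    then show ?thesis
      using that[of "fst (L ! j)"] that[of "fst (L ! j) + 1"] by (cases "even (fst (L ! j))") auto
  qed
  then have "(x, y + 1, h + 2 * int n) \<in> bricks"
    using aligned_ring_in_bricks[OF j aligned t(1) two_n_in_blocker[OF n_pos t(2,3)], of "(0, 1)"]
      cell[where a = 0 and b = 1] by (simp add: Osq_iff)
  ultimately show False by blast
qed

end

lemma representatives_complement:
  assumes "representatives n S Kbar" "i \<in> {1..4}" "p \<in> Zn3 n" "p \<notin> S i"
  obtains r k where "r \<in> set (Kbar i)" "shiftd n r k = p"
proof -
  have "p \<in> {shiftd n r k | r k. r \<in> set (Kbar i) \<and> k \<in> {0..<int n}}"
    using assms unfolding representatives_def by blast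
  then show ?thesis using that by blast
qed

lemma enum_reps_labels: "fst ` set (enum_reps Kbar) \<subseteq> {1..4}"
  by (auto simp: enum_reps_def)

lemma enum_reps_index:
  assumes "i \<in> {1..4}" "r \<in> set (Kbar i)"
  obtains j where "j < length (enum_reps Kbar)" "enum_reps Kbar ! j = (i, r)"
proof -
  have "i = 1 \<or> i = 2 \<or> i = 3 \<or> i = 4" using assms(1) by auto
  then have "(i, r) \<in> set (enum_reps Kbar)" using assms(2) by (elim disjE) (simp_all add: enum_reps_def)
  then show ?thesis using that by (auto simp: in_set_conv_nth)
qed

lemma shiftd_entries:
  assumes "i \<noteq> 0" "shiftd n r k = (T s, T (p2add s (uvec i)), T (p2add s (uvec (Suc i))))"
    "t \<in> {0, i, i + 1}"
  shows "T (p2add s (nbr_dir t)) = (triple_entry t (i, r) + k) mod int n"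
  using assms by (cases r) (auto simp: shiftd_def triple_entry_def nbr_dir_def p2add_def)

theorem lemma4p3:
  fixes n :: nat and S :: "nat \<Rightarrow> pt3 set" and Kbar :: "nat \<Rightarrow> pt3 list" and W :: "pt3 set"
  assumes "cyclic_triomino_set n S"
    and "gcd n 6 = 1"
    and "representatives n S Kbar"
    and "W \<subseteq> {((3 * int (length (enum_reps Kbar)) + 2) * x, 5 * y, 6 * z) | x y z. True}"
    and "(\<lambda>p. padd p (0, 0, 6 * int n)) ` W = W"
    and "non_overlapping W (brick n (enum_reps Kbar))"
    and "tiles (filler n) (UNIV - msum W (brick n (enum_reps Kbar)))"
  shows "triomino_solvable n S"
proof -
  let ?L = "enum_reps Kbar"
  obtain W' where "non_overlapping W' (filler n)" "msum W' (filler n) = UNIV - msum W (brick n ?L)"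
    using assms(7) unfolding tiles_def by blast
  moreover have "odd n" \<comment> \<open>the only use of gcd n 6 = 1\<close>
  proof
    assume "even n"
    then have "2 dvd gcd n 6" by simp
    then show False using assms(2) by simp
  qed
  ultimately interpret brick_filler_tiling n ?L W W'
    using enum_reps_labels assms(4-6) by unfold_locales
  have "(column_label s, column_label (p2add s (uvec i)), column_label (p2add s (uvec (Suc i)))) \<in> S i"
    (is "?triple \<in> _") if i: "i \<in> {1..4}" for s i
  proof (rule ccontr)
    assume "?triple \<notin> S i"
    moreover have "?triple \<in> Zn3 n" using column_label_range by (simp add: Zn3_def)
    ultimately obtain r k where r: "r \<in> set (Kbar i)" and k: "shiftd n r k = ?triple"
      using representatives_complement[OF assms(3) i] by blast
    obtain j where j: "j < length ?L" "?L ! j = (i, r)" using enum_reps_index[where Kbar = Kbar, OF i r] .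
    have "aligned_at s j (6 * k)"
      using column_labels_aligned[OF j(1)] shiftd_entries[OF _ k] i j(2) by auto
    then show False using no_aligned_tube[OF j(1)] by contradiction
  qed
  then show ?thesis unfolding triomino_solvable_def using column_label_range by blast
qed

end
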